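(* Let $r\ge1$ be an integer, $d=2r-1$, $\beta>0$, and let $Q$ be a complex polynomial of degree $r$ with $Q(0)=0$. Define complex numbers $a_i,b_i$ ($0\le i\le d$) by $$1-2Q'(x)=\sum_{i=0}^d a_ix^i,\qquad x\big(Q'(x)^2-Q'(x)-Q''(x)\big)=\sum_{i=0}^d b_ix^i,$$ and assume $a_{r-1}b_d\neq0$. For $n\ge0$ and $0\le i\le \min(n,d)$ put $$\gamma_{ni}=\Big(a_i\big(n-i+\tfrac{\beta}{2}\big)+b_i\Big)\sqrt{\frac{n!(\beta)_n}{(n-i)!(\beta)_{n-i}}}.$$ Define polynomials $P_n$ by $P_0=1$, $P_n=0$ for $n<0$, and $$\Big(x+\frac{\beta}{2}\Big)P_n(x)=\sqrt{(n+1)(n+\beta)}\,P_{n+1}(x)+\sum_{i=0}^{\min(n,d)}\gamma_{ni}P_{n-i}(x),\qquad n\ge0.$$ Let $\psi_{nk}$ ($n,k\ge0$) be the matrix elements of $S=e^{J_+}e^{Q(J_-)}$ as described in the context. Then $\psi_{nk}=P_n(k)\,\psi_{0k}$ for all $n,k\ge0$, and $\{P_n\}_{n\ge0}$ is a $d$-orthogonal polynomial set.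
   Context: $(a)_n=a(a+1)\cdots(a+n-1)$, $(a)_0=1$. Let $H_\beta$ be a Hilbert space with orthonormal basis $\{|n\rangle\}_{n\ge0}$, and let $J_+,J_-,J_0$ act by $J_+|n\rangle=\sqrt{(n+1)(n+\beta)}\,|n+1\rangle$, $J_-|n\rangle=\sqrt{n(n+\beta-1)}\,|n-1\rangle$ ($J_-|0\rangle=0$), $J_0|n\rangle=(n+\frac\beta2)|n\rangle$ (the positive discrete series representation of $\mathfrak{su}(1,1)$, with $[J_-,J_+]=2J_0$, $[J_0,J_\pm]=\pm J_\pm$). For each $n$, $e^{Q(J_-)}|n\rangle=\sum_{m\ge0}\frac{1}{m!}Q(J_-)^m|n\rangle$ is a finite linear combination of $|0\rangle,\dots,|n\rangle$; applying $e^{J_+}=\sum_{m\ge0}J_+^m/m!$ to it formally, only finitely many terms contribute to the coefficient of each $|k\rangle$. The matrix element $\psi_{nk}=\langle k|S|n\rangle$ is defined as this coefficient of $|k\rangle$ in $e^{J_+}e^{Q(J_-)}|n\rangle$. A polynomial set is a sequence $\{P_n\}$ of polynomials with $\deg P_n=n$; for a positive integer $d$ it is $d$-orthogonal if there exist linear functionals $\mathcal{L}_0,\dots,\mathcal{L}_{d-1}$ on the space of polynomials such that for each $i$: $\mathcal{L}_i(P_mP_n)=0$ whenever $n\ge md+i+1$, and $\mathcal{L}_i(P_nP_{nd+i})\ne0$ for all $n\ge0$. *)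

theory Defs
  imports Complex_Main "HOL-Computational_Algebra.Polynomial"
begin

text \<open>Vectors of H_beta are represented by their coefficient functions
  nat \<Rightarrow> complex w.r.t. the orthonormal basis |n>.\<close>

definition basis_vec :: "nat \<Rightarrow> nat \<Rightarrow> complex" where
  "basis_vec n = (\<lambda>m. if m = n then 1 else 0)"

text \<open>J_+ |n> = sqrt((n+1)(n+beta)) |n+1>, so the coefficient of |m> in J_+ v is
  sqrt(m(m-1+beta)) v(m-1) for m >= 1 and 0 for m = 0.\<close>
definition Jplus :: "real \<Rightarrow> (nat \<Rightarrow> complex) \<Rightarrow> (nat \<Rightarrow> complex)" where
  "Jplus \<beta> v = (\<lambda>m. if m = 0 then 0
      else complex_of_real (sqrt (real m * (real m - 1 + \<beta>))) * v (m - 1))"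

text \<open>J_- |n> = sqrt(n(n+beta-1)) |n-1>, so the coefficient of |m> in J_- v is
  sqrt((m+1)(m+beta)) v(m+1).\<close>
definition Jminus :: "real \<Rightarrow> (nat \<Rightarrow> complex) \<Rightarrow> (nat \<Rightarrow> complex)" where
  "Jminus \<beta> v = (\<lambda>m. complex_of_real (sqrt (real (m + 1) * (real m + \<beta>))) * v (m + 1))"

definition QJminus :: "real \<Rightarrow> complex poly \<Rightarrow> (nat \<Rightarrow> complex) \<Rightarrow> (nat \<Rightarrow> complex)" where
  "QJminus \<beta> Q v = (\<lambda>m. \<Sum>j\<le>degree Q. coeff Q j * ((Jminus \<beta> ^^ j) v) m)"

definition expQJminus :: "real \<Rightarrow> complex poly \<Rightarrow> (nat \<Rightarrow> complex) \<Rightarrow> (nat \<Rightarrow> complex)" where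
  "expQJminus \<beta> Q v = (\<lambda>k. \<Sum>m. ((QJminus \<beta> Q ^^ m) v) k / fact m)"

definition expJplus :: "real \<Rightarrow> (nat \<Rightarrow> complex) \<Rightarrow> (nat \<Rightarrow> complex)" where
  "expJplus \<beta> v = (\<lambda>k. \<Sum>m. ((Jplus \<beta> ^^ m) v) k / fact m)"

definition psi :: "real \<Rightarrow> complex poly \<Rightarrow> nat \<Rightarrow> nat \<Rightarrow> complex" where
  "psi \<beta> Q n k = expJplus \<beta> (expQJminus \<beta> Q (basis_vec n)) k"

definition coef_a :: "complex poly \<Rightarrow> nat \<Rightarrow> complex" where
  "coef_a Q i = coeff (1 - smult 2 (pderiv Q)) i"

definition coef_b :: "complex poly \<Rightarrow> nat \<Rightarrow> complex" where
  "coef_b Q i = coeff ([:0, 1:] * ((pderiv Q)^2 - pderiv Q - pderiv (pderiv Q))) i"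

definition gamma :: "real \<Rightarrow> complex poly \<Rightarrow> nat \<Rightarrow> nat \<Rightarrow> complex" where
  "gamma \<beta> Q n i = (coef_a Q i * complex_of_real (real (n - i) + \<beta> / 2) + coef_b Q i)
     * complex_of_real (sqrt (fact n * pochhammer \<beta> n / (fact (n - i) * pochhammer \<beta> (n - i))))"

definition linear_functional :: "(complex poly \<Rightarrow> complex) \<Rightarrow> bool" where
  "linear_functional L \<longleftrightarrow> (\<forall>p q. L (p + q) = L p + L q) \<and> (\<forall>c p. L (smult c p) = c * L p)"

definition polynomial_set :: "(nat \<Rightarrow> complex poly) \<Rightarrow> bool" where
  "polynomial_set P \<longleftrightarrow> (\<forall>n. degree (P n) = n)"

definition d_orthogonal :: "nat \<Rightarrow> (nat \<Rightarrow> complex poly) \<Rightarrow> bool" where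
  "d_orthogonal d P \<longleftrightarrow> polynomial_set P \<and>
     (\<exists>L :: nat \<Rightarrow> complex poly \<Rightarrow> complex. \<forall>i<d. linear_functional (L i) \<and>
        (\<forall>m n. n \<ge> m * d + i + 1 \<longrightarrow> L i (P m * P n) = 0) \<and>
        (\<forall>n. L i (P n * P (n * d + i)) \<noteq> 0))"

end

theory Submission
  imports Defs "HOL-Computational_Algebra.Polynomial_FPS"
begin

(*
  Expanding e^Q(J_-) |n> and then applying e^J_+ gives

    psi_nk = N_n N_k [x^n] W_k(x) e^Q(x),    N_j = sqrt (j! (beta)_j),

  where W_k(x) = sum_{j <= k} x^j / (j! (beta)_j (k - j)!) = 1F1(-k; beta; -x) / k!.
  Since W_k solves Kummer's equation x W'' + (beta + x) W' = k W and (e^Q)' = Q' e^Q,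
  the product F = W_k e^Q satisfies

    (k + beta/2) F = x F'' + beta F' + (1 - 2 Q') (x F' + beta/2 F) + x (Q'^2 - Q' - Q'') F,

  and comparing coefficients of x^n gives for n |-> psi_nk the recurrence that defines
  P_n(k). The two solutions agree at n = 0, hence everywhere.

  The recurrence has d + 2 terms and nonzero outer coefficients (gamma_nd is b_d times a
  positive number, because a_d = 0). Induction on m shows that x^m P_n is a combination
  of the P_j with j >= n - m d whose coefficient at P_(n - m d) is nonzero, so the
  coordinate functionals of the basis (P_n) witness d-orthogonality.
*)

unbundle fps_syntax

section \<open>The matrix elements as coefficients of a power series\<close>

lemma fps_deriv_exp_compose:
  fixes f :: "'a::field_char_0 fps"
  assumes "f $ 0 = 0"
  shows "fps_deriv (fps_exp 1 oo f) = (fps_exp 1 oo f) * fps_deriv f"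
  using assms by (simp add: fps_compose_deriv)

lemma fps_X_deriv_deriv_plus_nth:
  "(fps_X * fps_deriv (fps_deriv f) + fps_const b * fps_deriv f) $ n
     = (of_nat n + 1) * (of_nat n + b) * f $ Suc n"
  for f :: "'a::comm_ring_1 fps"
  by (cases n) (simp_all add: algebra_simps)

lemma fps_X_deriv_plus_nth:
  "(fps_X * fps_deriv f + fps_const c * f) $ n = (of_nat n + c) * f $ n"
  for f :: "'a::comm_ring_1 fps"
  by (cases n) (simp_all add: algebra_simps)

lemma coef_a_eq_0:
  assumes "0 < degree Q" "degree Q \<le> i"
  shows "coef_a Q i = 0"
proof -
  have "degree (smult 2 (pderiv Q)) < degree Q"
    using assms(1) degree_smult_le[of 2 "pderiv Q"] by (simp add: degree_pderiv)
  then have "degree (1 - smult 2 (pderiv Q)) < degree Q"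
    using assms(1) by (intro degree_diff_less) auto
  then show ?thesis
    unfolding coef_a_def using assms(2) by (intro coeff_eq_0) auto
qed

lemma coef_b_eq_0:
  assumes "0 < degree Q" "2 * degree Q - 1 < i"
  shows "coef_b Q i = 0"
proof -
  have "degree (pderiv Q) \<le> degree Q - 1" "degree (pderiv (pderiv Q)) \<le> 2 * (degree Q - 1)"
    by (simp_all add: degree_pderiv)
  moreover have "degree ((pderiv Q)\<^sup>2) \<le> 2 * (degree Q - 1)"
    using degree_power_le[of "pderiv Q" 2] by (simp add: degree_pderiv)
  ultimately have "degree ((pderiv Q)\<^sup>2 - pderiv Q - pderiv (pderiv Q)) \<le> 2 * (degree Q - 1)"
    by (intro degree_diff_le) auto
  then have "degree ([:0, 1:] * ((pderiv Q)\<^sup>2 - pderiv Q - pderiv (pderiv Q))) \<le> 2 * degree Q - 1"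
    using assms(1) degree_pCons_le[of 0 "(pderiv Q)\<^sup>2 - pderiv Q - pderiv (pderiv Q)"] by simp
  then show ?thesis
    unfolding coef_b_def using assms(2) by (intro coeff_eq_0) auto
qed

text \<open>J_+^j |0> = ladder_norm beta j |j>.\<close>
definition ladder_norm :: "real \<Rightarrow> nat \<Rightarrow> real" where
  "ladder_norm \<beta> j = sqrt (fact j * pochhammer \<beta> j)"

text \<open>The vector f(J_-) |n> for a power series f, as
  J_-^l |n> = (ladder_norm beta n / ladder_norm beta (n - l)) |n - l>.\<close>
definition Jminus_series :: "real \<Rightarrow> complex fps \<Rightarrow> nat \<Rightarrow> nat \<Rightarrow> complex" where
  "Jminus_series \<beta> f n = (\<lambda>j. if j \<le> n
     then complex_of_real (ladder_norm \<beta> n / ladder_norm \<beta> j) * f $ (n - j) else 0)"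

text \<open>k! times this is the Kummer polynomial 1F1(-k; beta; -x).\<close>
definition kummer_fps :: "real \<Rightarrow> nat \<Rightarrow> complex fps" where
  "kummer_fps \<beta> k = Abs_fps (\<lambda>j. if j \<le> k
     then complex_of_real (1 / (fact j * pochhammer \<beta> j * fact (k - j))) else 0)"

context
  fixes \<beta> :: real
  assumes \<beta>_pos: "\<beta> > 0"
begin

lemma ladder_norm_pos: "ladder_norm \<beta> j > 0"
  unfolding ladder_norm_def using \<beta>_pos by (simp add: pochhammer_pos)

lemma ladder_norm_squared: "(ladder_norm \<beta> j)\<^sup>2 = fact j * pochhammer \<beta> j"
  unfolding ladder_norm_def using \<beta>_pos by (simp add: pochhammer_pos less_imp_le)

lemma ladder_norm_Suc:
  "ladder_norm \<beta> (Suc j) = sqrt (real (j + 1) * (real j + \<beta>)) * ladder_norm \<beta> j"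
proof -
  have "fact (Suc j) * pochhammer \<beta> (Suc j) = real (j + 1) * (real j + \<beta>) * (fact j * pochhammer \<beta> j)"
    by (simp add: pochhammer_rec' algebra_simps)
  then show ?thesis
    unfolding ladder_norm_def by (simp only: real_sqrt_mult)
qed

lemma Jplus_funpow:
  "(Jplus \<beta> ^^ m) w k =
     (if m \<le> k then complex_of_real (ladder_norm \<beta> k / ladder_norm \<beta> (k - m)) * w (k - m) else 0)"
proof (induction m arbitrary: k)
  case 0
  show ?case using ladder_norm_pos[of k] by simp
next
  case (Suc m)
  then show ?case
    by (cases k) (simp_all add: Jplus_def ladder_norm_Suc flip: of_real_mult)
qed

lemma Jminus_series_mult_X:
  "Jminus \<beta> (Jminus_series \<beta> f n) = Jminus_series \<beta> (fps_X * f) n"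
proof
  fix j
  have "sqrt (real (j + 1) * (real j + \<beta>)) * (ladder_norm \<beta> n / ladder_norm \<beta> (Suc j))
      = ladder_norm \<beta> n / ladder_norm \<beta> j"
    using ladder_norm_pos[of j] \<beta>_pos by (simp add: ladder_norm_Suc)
  then have "complex_of_real (sqrt (real (j + 1) * (real j + \<beta>)))
      * complex_of_real (ladder_norm \<beta> n / ladder_norm \<beta> (Suc j))
      = complex_of_real (ladder_norm \<beta> n / ladder_norm \<beta> j)"
    by (metis of_real_mult)
  then show "Jminus \<beta> (Jminus_series \<beta> f n) j = Jminus_series \<beta> (fps_X * f) n j"
    by (auto simp: Jminus_def Jminus_series_def Suc_diff_Suc mult.assoc simp del: of_real_divide)
qed

lemma Jminus_funpow_series:
  "(Jminus \<beta> ^^ i) (Jminus_series \<beta> f n) = Jminus_series \<beta> (fps_X ^ i * f) n"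
  by (induction i) (simp_all add: Jminus_series_mult_X mult.assoc)

lemma QJminus_series:
  "QJminus \<beta> Q (Jminus_series \<beta> f n) = Jminus_series \<beta> (fps_of_poly Q * f) n"
proof
  fix m
  have "fps_of_poly Q * f = (\<Sum>j\<le>degree Q. fps_const (coeff Q j) * (fps_X ^ j * f))"
    by (subst poly_as_sum_of_monoms[symmetric])
      (simp add: fps_of_poly_sum fps_of_poly_monom sum_distrib_right mult.assoc)
  then have "(fps_of_poly Q * f) $ l = (\<Sum>j\<le>degree Q. coeff Q j * (fps_X ^ j * f) $ l)" for l
    by (simp only: fps_sum_nth fps_mult_left_const_nth)
  then show "QJminus \<beta> Q (Jminus_series \<beta> f n) m = Jminus_series \<beta> (fps_of_poly Q * f) n m"
    unfolding QJminus_def Jminus_funpow_series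
    by (simp add: Jminus_series_def sum_distrib_left mult.left_commute)
qed

lemma basis_vec_eq_series: "basis_vec n = Jminus_series \<beta> 1 n"
  using ladder_norm_pos[of n] by (auto simp: basis_vec_def Jminus_series_def)

lemma QJminus_funpow_basis:
  "(QJminus \<beta> Q ^^ m) (basis_vec n) = Jminus_series \<beta> (fps_of_poly Q ^ m) n"
  by (induction m) (simp_all add: basis_vec_eq_series QJminus_series)

lemma expQJminus_basis:
  assumes "poly Q 0 = 0"
  shows "expQJminus \<beta> Q (basis_vec n) = Jminus_series \<beta> (fps_exp 1 oo fps_of_poly Q) n"
proof
  fix j
  have Q_nth_0: "fps_of_poly Q $ 0 = 0"
    using assms by (simp add: poly_0_coeff_0)
  have "expQJminus \<beta> Q (basis_vec n) j
      = (\<Sum>m\<in>{0..n - j}. Jminus_series \<beta> (fps_of_poly Q ^ m) n j / fact m)"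
    unfolding expQJminus_def QJminus_funpow_basis
    by (rule suminf_finite)
      (auto simp: Jminus_series_def startsby_zero_power_prefix[OF Q_nth_0])
  also have "\<dots> = Jminus_series \<beta> (fps_exp 1 oo fps_of_poly Q) n j"
    by (auto simp: Jminus_series_def fps_compose_nth sum_distrib_left)
  finally show "expQJminus \<beta> Q (basis_vec n) j = Jminus_series \<beta> (fps_exp 1 oo fps_of_poly Q) n j" .
qed

lemma expJplus_Jminus_series:
  "expJplus \<beta> (Jminus_series \<beta> f n) k
     = complex_of_real (ladder_norm \<beta> n * ladder_norm \<beta> k) * (kummer_fps \<beta> k * f) $ n"
proof -
  define v where "v = Jminus_series \<beta> f n"
  define T where "T j = complex_of_real (ladder_norm \<beta> n * ladder_norm \<beta> k)
    * ((kummer_fps \<beta> k) $ j * f $ (n - j))" for j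
  have summand: "complex_of_real (ladder_norm \<beta> k / ladder_norm \<beta> j) * v j / fact (k - j)
      = (if j \<le> n then T j else 0)" if "j \<le> k" for j
  proof -
    have "ladder_norm \<beta> k / ladder_norm \<beta> j * (ladder_norm \<beta> n / ladder_norm \<beta> j) / fact (k - j)
        = ladder_norm \<beta> n * ladder_norm \<beta> k / (fact j * pochhammer \<beta> j * fact (k - j))"
      using ladder_norm_squared[of j] by (simp add: power2_eq_square field_simps)
    then have "complex_of_real (ladder_norm \<beta> k / ladder_norm \<beta> j
        * (ladder_norm \<beta> n / ladder_norm \<beta> j) / fact (k - j)) * f $ (n - j)
      = complex_of_real (ladder_norm \<beta> n * ladder_norm \<beta> k
        * (1 / (fact j * pochhammer \<beta> j * fact (k - j)))) * f $ (n - j)"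
      by simp
    then show ?thesis
      using that by (simp add: v_def T_def Jminus_series_def kummer_fps_def mult_ac)
  qed
  have "expJplus \<beta> v k = (\<Sum>m\<in>{0..k}. (Jplus \<beta> ^^ m) v k / fact m)"
    unfolding expJplus_def by (rule suminf_finite) (auto simp: Jplus_funpow)
  also have "\<dots> = (\<Sum>m\<in>{0..k}. complex_of_real (ladder_norm \<beta> k / ladder_norm \<beta> (k - m)) * v (k - m) / fact m)"
    by (simp add: Jplus_funpow)
  also have "\<dots> = (\<Sum>j\<in>{0..k}. complex_of_real (ladder_norm \<beta> k / ladder_norm \<beta> j) * v j / fact (k - j))"
    by (subst sum.atLeastAtMost_rev) (auto intro!: sum.cong)
  also have "\<dots> = (\<Sum>j\<in>{0..k}. if j \<in> {0..n} then T j else 0)"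
    using summand by (intro sum.cong) auto
  also have "\<dots> = (\<Sum>j\<in>{0..n}. if j \<in> {0..k} then T j else 0)"
    by (simp only: sum.inter_restrict[symmetric] finite_atLeastAtMost Int_commute)
  also have "\<dots> = complex_of_real (ladder_norm \<beta> n * ladder_norm \<beta> k) * (kummer_fps \<beta> k * f) $ n"
    by (auto simp: fps_mult_nth sum_distrib_left T_def kummer_fps_def intro!: sum.cong)
  finally show ?thesis
    unfolding v_def .
qed

lemma psi_eq_kummer_coeff:
  assumes "poly Q 0 = 0"
  shows "psi \<beta> Q n k = complex_of_real (ladder_norm \<beta> n * ladder_norm \<beta> k)
    * (kummer_fps \<beta> k * (fps_exp 1 oo fps_of_poly Q)) $ n"
  unfolding psi_def expQJminus_basis[OF assms] by (rule expJplus_Jminus_series)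

lemma kummer_fps_coeff_recurrence:
  "(of_nat n + 1) * (of_nat n + complex_of_real \<beta>) * (kummer_fps \<beta> k) $ Suc n
     = (of_nat k - of_nat n) * (kummer_fps \<beta> k) $ n"
proof -
  define w where "w j = (if j \<le> k then 1 / (fact j * pochhammer \<beta> j * fact (k - j)) else 0)" for j
  have "(real n + 1) * (real n + \<beta>) * w (Suc n) = (real k - real n) * w n"
  proof (cases "Suc n \<le> k")
    case True
    then obtain m where k: "k = Suc (n + m)"
      using le_Suc_ex[OF True] by auto
    define D where "D = fact n * pochhammer \<beta> n * fact m"
    have "w (Suc n) = 1 / (((real n + 1) * (real n + \<beta>)) * D)"
      by (simp add: w_def k D_def pochhammer_rec' algebra_simps)
    moreover have "w n = 1 / ((real m + 1) * D)"
      by (simp add: w_def k D_def algebra_simps)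
    moreover have "real n + \<beta> \<noteq> 0"
      using \<beta>_pos by simp
    ultimately show ?thesis
      by (simp add: k add.commute)
  next
    case False
    then show ?thesis
      by (cases "n = k") (auto simp: w_def)
  qed
  then have "complex_of_real ((real n + 1) * (real n + \<beta>) * w (Suc n)) = complex_of_real ((real k - real n) * w n)"
    by (rule arg_cong)
  moreover have "kummer_fps \<beta> k $ j = complex_of_real (w j)" for j
    by (simp add: kummer_fps_def w_def)
  ultimately show ?thesis
    by simp
qed

lemma kummer_fps_ode:
  "fps_X * fps_deriv (fps_deriv (kummer_fps \<beta> k)) + fps_const (complex_of_real \<beta>) * fps_deriv (kummer_fps \<beta> k)
     = fps_const (of_nat k) * kummer_fps \<beta> k - fps_X * fps_deriv (kummer_fps \<beta> k)"
proof (rule fps_ext)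
  fix n
  show "(fps_X * fps_deriv (fps_deriv (kummer_fps \<beta> k))
      + fps_const (complex_of_real \<beta>) * fps_deriv (kummer_fps \<beta> k)) $ n
    = (fps_const (of_nat k) * kummer_fps \<beta> k - fps_X * fps_deriv (kummer_fps \<beta> k)) $ n"
    using kummer_fps_coeff_recurrence[of n k] by (cases n) (simp_all add: algebra_simps)
qed

lemma kummer_exp_ode:
  fixes k :: nat
  assumes "poly Q 0 = 0"
  defines "F \<equiv> kummer_fps \<beta> k * (fps_exp 1 oo fps_of_poly Q)" and "b \<equiv> complex_of_real \<beta>"
  shows "fps_const (of_nat k + b / 2) * F
    = fps_X * fps_deriv (fps_deriv F) + fps_const b * fps_deriv F
      + fps_of_poly (1 - smult 2 (pderiv Q)) * (fps_X * fps_deriv F + fps_const (b / 2) * F)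
      + fps_of_poly ([:0, 1:] * ((pderiv Q)\<^sup>2 - pderiv Q - pderiv (pderiv Q))) * F"
proof -
  define W where "W = kummer_fps \<beta> k"
  define E where "E = fps_exp 1 oo fps_of_poly Q"
  define q where "q = fps_deriv (fps_of_poly Q)"
  define c where "c = fps_const (b / 2)"
  have E': "fps_deriv E = E * q"
    unfolding E_def q_def using assms(1) by (simp add: fps_deriv_exp_compose poly_0_coeff_0)
  have F': "fps_deriv F = fps_deriv W * E + W * E * q"
    unfolding F_def W_def[symmetric] E_def[symmetric] by (simp add: E')
  have F'': "fps_deriv (fps_deriv F) = fps_deriv (fps_deriv W) * E + 2 * fps_deriv W * E * q
      + W * E * (q\<^sup>2 + fps_deriv q)"
    unfolding F' by (simp add: E' algebra_simps power2_eq_square)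
  have ode: "fps_X * fps_deriv (fps_deriv W) + 2 * c * fps_deriv W = fps_const (of_nat k) * W - fps_X * fps_deriv W"
  proof -
    have "2 * c = fps_const b"
      by (simp add: c_def fps_numeral_fps_const flip: fps_const_mult)
    then show ?thesis
      using kummer_fps_ode[of k] by (simp add: W_def b_def)
  qed
  \<comment> \<open>the two sides differ by E times Kummer's equation for W\<close>
  have "fps_X * fps_deriv (fps_deriv F) + 2 * c * fps_deriv F
      + (1 - 2 * q) * (fps_X * fps_deriv F + c * F) + (q\<^sup>2 - q - fps_deriv q) * fps_X * F
    = (fps_const (of_nat k) + c) * F
      + E * (fps_X * fps_deriv (fps_deriv W) + 2 * c * fps_deriv W - (fps_const (of_nat k) * W - fps_X * fps_deriv W))"
    unfolding F'' F' unfolding F_def W_def[symmetric] E_def[symmetric]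
    by (simp add: E' algebra_simps power2_eq_square)
  then show ?thesis
    unfolding ode by (simp add: c_def q_def fps_of_poly_diff fps_of_poly_smult fps_of_poly_pderiv
        fps_of_poly_pCons fps_of_poly_power fps_numeral_fps_const flip: fps_const_add)
qed

lemma kummer_exp_coeff_recurrence:
  fixes k :: nat
  assumes "poly Q 0 = 0"
  defines "F \<equiv> kummer_fps \<beta> k * (fps_exp 1 oo fps_of_poly Q)" and "b \<equiv> complex_of_real \<beta>"
  shows "(of_nat k + b / 2) * F $ n = (of_nat n + 1) * (of_nat n + b) * F $ Suc n
    + (\<Sum>i=0..n. (coef_a Q i * (of_nat (n - i) + b / 2) + coef_b Q i) * F $ (n - i))"
proof -
  have "(of_nat k + b / 2) * F $ n = (fps_const (of_nat k + b / 2) * F) $ n"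
    by simp
  also have "\<dots> = (of_nat n + 1) * (of_nat n + b) * F $ Suc n
      + (\<Sum>i=0..n. coef_a Q i * ((of_nat (n - i) + b / 2) * F $ (n - i)))
      + (\<Sum>i=0..n. coef_b Q i * F $ (n - i))"
  proof -
    let ?D = "fps_X * fps_deriv (fps_deriv F) + fps_const b * fps_deriv F"
    let ?A = "fps_of_poly (1 - smult 2 (pderiv Q)) * (fps_X * fps_deriv F + fps_const (b / 2) * F)"
    have "(?A) $ n = (\<Sum>i=0..n. coef_a Q i * ((of_nat (n - i) + b / 2) * F $ (n - i)))"
      by (simp only: fps_mult_nth fps_of_poly_nth fps_X_deriv_plus_nth coef_a_def)
    moreover have "(fps_of_poly ([:0, 1:] * ((pderiv Q)\<^sup>2 - pderiv Q - pderiv (pderiv Q))) * F) $ n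
        = (\<Sum>i=0..n. coef_b Q i * F $ (n - i))"
      by (simp only: fps_mult_nth fps_of_poly_nth coef_b_def)
    ultimately show ?thesis
      unfolding kummer_exp_ode[OF assms(1), of k, folded F_def b_def]
        fps_add_nth[of "?D + ?A"] fps_add_nth[of ?D] fps_X_deriv_deriv_plus_nth
      by (simp only:)
  qed
  finally show ?thesis
    by (simp add: sum.distrib[symmetric] algebra_simps)
qed

lemma gamma_mult_ladder_norm:
  assumes "i \<le> n"
  shows "gamma \<beta> Q n i * complex_of_real (ladder_norm \<beta> (n - i))
    = (coef_a Q i * (of_nat (n - i) + complex_of_real \<beta> / 2) + coef_b Q i)
      * complex_of_real (ladder_norm \<beta> n)"
proof -
  have "pochhammer \<beta> (n - i) > 0" "pochhammer \<beta> n > 0"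
    using \<beta>_pos by (simp_all add: pochhammer_pos)
  then have "sqrt (fact n * pochhammer \<beta> n / (fact (n - i) * pochhammer \<beta> (n - i)))
      * ladder_norm \<beta> (n - i) = ladder_norm \<beta> n"
    unfolding ladder_norm_def by (simp flip: real_sqrt_mult)
  then show ?thesis
    unfolding gamma_def by (simp add: mult.assoc flip: of_real_mult)
qed

lemma sqrt_mult_psi_Suc:
  assumes "poly Q 0 = 0"
  shows "complex_of_real (sqrt (real (n + 1) * (real n + \<beta>))) * psi \<beta> Q (Suc n) k
    = complex_of_real (ladder_norm \<beta> n * ladder_norm \<beta> k)
      * ((of_nat n + 1) * (of_nat n + complex_of_real \<beta>)
         * (kummer_fps \<beta> k * (fps_exp 1 oo fps_of_poly Q)) $ Suc n)"
proof -
  have "sqrt (real (n + 1) * (real n + \<beta>)) * (ladder_norm \<beta> (Suc n) * ladder_norm \<beta> k)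
      = (real n + 1) * (real n + \<beta>) * (ladder_norm \<beta> n * ladder_norm \<beta> k)"
    using \<beta>_pos by (simp add: ladder_norm_Suc mult.assoc[symmetric] flip: real_sqrt_mult)
  then have "complex_of_real (sqrt (real (n + 1) * (real n + \<beta>))
        * (ladder_norm \<beta> (Suc n) * ladder_norm \<beta> k))
      = complex_of_real ((real n + 1) * (real n + \<beta>) * (ladder_norm \<beta> n * ladder_norm \<beta> k))"
    by (rule arg_cong)
  then show ?thesis
    unfolding psi_eq_kummer_coeff[OF assms] by (auto simp: mult_ac)
qed

lemma gamma_mult_psi:
  assumes "poly Q 0 = 0" and "i \<le> n"
  shows "gamma \<beta> Q n i * psi \<beta> Q (n - i) k
    = complex_of_real (ladder_norm \<beta> n * ladder_norm \<beta> k)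
      * ((coef_a Q i * (of_nat (n - i) + complex_of_real \<beta> / 2) + coef_b Q i)
         * (kummer_fps \<beta> k * (fps_exp 1 oo fps_of_poly Q)) $ (n - i))"
proof -
  have "gamma \<beta> Q n i * psi \<beta> Q (n - i) k
      = gamma \<beta> Q n i * complex_of_real (ladder_norm \<beta> (n - i))
        * (complex_of_real (ladder_norm \<beta> k) * (kummer_fps \<beta> k * (fps_exp 1 oo fps_of_poly Q)) $ (n - i))"
    by (simp add: psi_eq_kummer_coeff[OF assms(1)] mult_ac)
  then show ?thesis
    unfolding gamma_mult_ladder_norm[OF assms(2)] by (simp add: mult_ac)
qed

lemma gamma_last_nonzero:
  assumes "0 < degree Q" and "coef_b Q (2 * degree Q - 1) \<noteq> 0" and "2 * degree Q - 1 \<le> n"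
  shows "gamma \<beta> Q n (2 * degree Q - 1) \<noteq> 0"
proof -
  have "coef_a Q (2 * degree Q - 1) = 0"
    using assms(1) by (intro coef_a_eq_0) auto
  moreover have "pochhammer \<beta> n > 0" "pochhammer \<beta> (n - (2 * degree Q - 1)) > 0"
    using \<beta>_pos by (simp_all add: pochhammer_pos)
  ultimately show ?thesis
    using assms(2) by (simp add: gamma_def)
qed

lemma psi_recurrence:
  assumes "poly Q 0 = 0" and "0 < degree Q"
  shows "(of_nat k + complex_of_real (\<beta> / 2)) * psi \<beta> Q n k
    = complex_of_real (sqrt (real (n + 1) * (real n + \<beta>))) * psi \<beta> Q (Suc n) k
      + (\<Sum>i\<le>min n (2 * degree Q - 1). gamma \<beta> Q n i * psi \<beta> Q (n - i) k)"
proof -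
  define F where "F = kummer_fps \<beta> k * (fps_exp 1 oo fps_of_poly Q)"
  define b where "b = complex_of_real \<beta>"
  define C where "C = complex_of_real (ladder_norm \<beta> n * ladder_norm \<beta> k)"
  define T where "T i = (coef_a Q i * (of_nat (n - i) + b / 2) + coef_b Q i) * F $ (n - i)" for i
  have "(\<Sum>i\<le>min n (2 * degree Q - 1). gamma \<beta> Q n i * psi \<beta> Q (n - i) k)
      = (\<Sum>i\<le>min n (2 * degree Q - 1). C * T i)"
    using gamma_mult_psi[OF assms(1)] by (intro sum.cong) (auto simp: C_def T_def F_def b_def)
  also have "\<dots> = (\<Sum>i=0..n. C * T i)"
    using coef_a_eq_0[OF assms(2)] coef_b_eq_0[OF assms(2)]
    by (intro sum.mono_neutral_left) (auto simp: T_def)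
  finally have tail: "(\<Sum>i\<le>min n (2 * degree Q - 1). gamma \<beta> Q n i * psi \<beta> Q (n - i) k)
      = C * (\<Sum>i=0..n. T i)"
    by (simp add: sum_distrib_left)
  have "(of_nat k + complex_of_real (\<beta> / 2)) * psi \<beta> Q n k = C * ((of_nat k + b / 2) * F $ n)"
    unfolding psi_eq_kummer_coeff[OF assms(1)] C_def b_def F_def by (simp add: algebra_simps)
  also have "\<dots> = C * ((of_nat n + 1) * (of_nat n + b) * F $ Suc n + (\<Sum>i=0..n. T i))"
    unfolding F_def b_def T_def by (simp only: kummer_exp_coeff_recurrence[OF assms(1)])
  finally show ?thesis
    unfolding tail sqrt_mult_psi_Suc[OF assms(1)] by (simp add: distrib_left C_def b_def F_def)
qed

end

section \<open>Polynomial sets given by a recurrence with d + 2 terms\<close>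

lemma recurrence_solution_unique:
  fixes u v :: "nat \<Rightarrow> 'a::field"
  assumes s_nonzero: "\<And>n. s n \<noteq> 0"
    and u: "\<And>n. a * u n = s n * u (Suc n) + (\<Sum>i\<le>min n d. g n i * u (n - i))"
    and v: "\<And>n. a * v n = s n * v (Suc n) + (\<Sum>i\<le>min n d. g n i * v (n - i))"
    and "v 0 = 1"
  shows "u n = v n * u 0"
proof (induction n rule: less_induct)
  case (less n)
  show ?case
  proof (cases n)
    case 0
    then show ?thesis
      using \<open>v 0 = 1\<close> by simp
  next
    case (Suc m)
    have IH: "u j = v j * u 0" if "j \<le> m" for j
      by (rule less.IH) (use Suc that in simp)
    have tail: "(\<Sum>i\<le>min m d. g m i * u (m - i)) = (\<Sum>i\<le>min m d. g m i * v (m - i)) * u 0"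
      unfolding sum_distrib_right
    proof (rule sum.cong)
      show "g m i * u (m - i) = g m i * v (m - i) * u 0" for i
        using IH[of "m - i"] by simp
    qed simp
    have "s m * u (Suc m) = a * u m - (\<Sum>i\<le>min m d. g m i * u (m - i))"
      using u[of m] by simp
    also have "\<dots> = (a * v m - (\<Sum>i\<le>min m d. g m i * v (m - i))) * u 0"
      unfolding tail IH[OF order_refl] by (simp add: algebra_simps)
    also have "\<dots> = s m * (v (Suc m) * u 0)"
      using v[of m] by simp
    finally have "s m * u (Suc m) = s m * (v (Suc m) * u 0)" .
    then show ?thesis
      using s_nonzero[of m] Suc by simp
  qed
qed

text \<open>Meaningful only for degree p \<le> N and degree (P j) = j.\<close>
fun basis_coords :: "(nat \<Rightarrow> 'a::field poly) \<Rightarrow> nat \<Rightarrow> 'a poly \<Rightarrow> nat \<Rightarrow> 'a" where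
  "basis_coords P 0 p = (\<lambda>j. if j = 0 then coeff p 0 / coeff (P 0) 0 else 0)"
| "basis_coords P (Suc N) p =
    (let c = coeff p (Suc N) / coeff (P (Suc N)) (Suc N)
     in (basis_coords P N (p - smult c (P (Suc N))))(Suc N := c))"

definition dual_coord :: "(nat \<Rightarrow> 'a::field poly) \<Rightarrow> nat \<Rightarrow> 'a poly \<Rightarrow> 'a" where
  "dual_coord P i p = basis_coords P (degree p) p i"

inductive_set tail_span :: "(nat \<Rightarrow> 'a::field poly) \<Rightarrow> nat \<Rightarrow> 'a poly set"
  for P :: "nat \<Rightarrow> 'a poly" and lo :: nat where
  basis: "lo \<le> j \<Longrightarrow> P j \<in> tail_span P lo"
| add: "p \<in> tail_span P lo \<Longrightarrow> q \<in> tail_span P lo \<Longrightarrow> p + q \<in> tail_span P lo"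
| smult: "p \<in> tail_span P lo \<Longrightarrow> smult a p \<in> tail_span P lo"

lemma basis_coords_beyond: "N < j \<Longrightarrow> basis_coords P N p j = 0"
  by (induction N arbitrary: p) (auto simp: Let_def)

lemma basis_coords_add: "basis_coords P N (p + q) j = basis_coords P N p j + basis_coords P N q j"
proof (induction N arbitrary: p q j)
  case 0
  then show ?case
    by (simp add: add_divide_distrib)
next
  case (Suc N)
  define u where "u r = coeff r (Suc N) / coeff (P (Suc N)) (Suc N)" for r
  have u_add: "u (p + q) = u p + u q"
    by (simp add: u_def add_divide_distrib)
  have split: "p + q - smult (u p + u q) (P (Suc N))
      = (p - smult (u p) (P (Suc N))) + (q - smult (u q) (P (Suc N)))"
    by (simp add: smult_add_left algebra_simps)
  show ?case
    unfolding basis_coords.simps Let_def u_def[symmetric] u_add split by (simp add: Suc.IH)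
qed

lemma basis_coords_smult: "basis_coords P N (smult a p) j = a * basis_coords P N p j"
proof (induction N arbitrary: p j)
  case (Suc N)
  have "smult a p - smult (a * coeff p (Suc N) / coeff (P (Suc N)) (Suc N)) (P (Suc N))
      = smult a (p - smult (coeff p (Suc N) / coeff (P (Suc N)) (Suc N)) (P (Suc N)))"
    by (simp add: smult_diff_right)
  then show ?case
    by (simp add: Let_def Suc.IH)
qed simp

lemma basis_coords_mono:
  assumes "degree p \<le> N" "N \<le> M"
  shows "basis_coords P M p = basis_coords P N p"
  using assms(2)
proof (induction M)
  case (Suc M)
  show ?case
  proof (cases "N = Suc M")
    case False
    then have "N \<le> M" "coeff p (Suc M) = 0"
      using Suc.prems assms(1) by (auto intro: coeff_eq_0)
    then show ?thesis
      using Suc.IH basis_coords_beyond[of M "Suc M" P p] by (auto simp: Let_def)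
  qed simp
qed simp

lemma dual_coord_eq_basis_coords: "degree p \<le> N \<Longrightarrow> dual_coord P i p = basis_coords P N p i"
  unfolding dual_coord_def using basis_coords_mono[of p "degree p" N P] by simp

lemma dual_coord_add: "dual_coord P i (p + q) = dual_coord P i p + dual_coord P i q"
proof -
  define N where "N = max (degree p) (degree q)"
  have "degree p \<le> N" "degree q \<le> N" "degree (p + q) \<le> N"
    unfolding N_def by (auto intro: degree_add_le)
  then show ?thesis
    by (simp add: dual_coord_eq_basis_coords[of _ N] basis_coords_add)
qed

lemma dual_coord_smult: "dual_coord P i (smult a p) = a * dual_coord P i p"
proof -
  have "dual_coord P i (smult a p) = basis_coords P (degree p) (smult a p) i"
    by (rule dual_coord_eq_basis_coords[OF degree_smult_le])
  then show ?thesis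
    by (simp add: basis_coords_smult dual_coord_def)
qed

lemma linear_functional_dual_coord: "linear_functional (dual_coord P i)"
  unfolding linear_functional_def by (simp add: dual_coord_add dual_coord_smult)

lemma tail_span_zero: "0 \<in> tail_span P lo"
  using tail_span.smult[OF tail_span.basis[of lo lo P], of 0] by simp

lemma tail_span_diff: "p \<in> tail_span P lo \<Longrightarrow> q \<in> tail_span P lo \<Longrightarrow> p - q \<in> tail_span P lo"
  using tail_span.add[of p P lo "smult (-1) q"] tail_span.smult[of q P lo "-1"] by simp

lemma tail_span_antimono: "p \<in> tail_span P lo \<Longrightarrow> lo' \<le> lo \<Longrightarrow> p \<in> tail_span P lo'"
  by (induction rule: tail_span.induct) (auto intro: tail_span.intros)

lemma tail_span_sum:
  "(\<And>x. x \<in> A \<Longrightarrow> f x \<in> tail_span P lo) \<Longrightarrow> sum f A \<in> tail_span P lo"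
  by (induction A rule: infinite_finite_induct) (auto intro: tail_span_zero tail_span.add)

locale poly_recurrence =
  fixes P :: "nat \<Rightarrow> 'a::field poly" and c :: 'a and s :: "nat \<Rightarrow> 'a"
    and g :: "nat \<Rightarrow> nat \<Rightarrow> 'a" and d :: nat
  assumes P_0: "P 0 = 1"
    and recurrence: "\<And>n. [:c, 1:] * P n
      = smult (s n) (P (Suc n)) + (\<Sum>i\<le>min n d. smult (g n i) (P (n - i)))"
    and s_nonzero: "\<And>n. s n \<noteq> 0"
begin

lemma degree_P: "degree (P n) = n"
proof (induction n rule: less_induct)
  case (less n)
  show ?case
  proof (cases n)
    case 0
    then show ?thesis
      by (simp add: P_0)
  next
    case (Suc m)
    have "P m \<noteq> 0"
      using less.IH[of m] Suc P_0 by (cases m) auto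
    then have "degree ([:c, 1:] * P m) = Suc m"
      using less.IH[of m] Suc by (subst degree_mult_eq) auto
    moreover have "degree (smult (g m i) (P (m - i))) \<le> m" for i
      using less.IH[of "m - i"] Suc by (intro le_trans[OF degree_smult_le]) simp
    then have "degree (\<Sum>i\<le>min m d. smult (g m i) (P (m - i))) \<le> m"
      by (intro degree_sum_le) auto
    ultimately have "degree ([:c, 1:] * P m + - (\<Sum>i\<le>min m d. smult (g m i) (P (m - i)))) = Suc m"
      by (subst degree_add_eq_left) auto
    then show ?thesis
      using recurrence[of m] s_nonzero[of m] Suc by simp
  qed
qed

lemma lead_coeff_P_nonzero: "coeff (P n) n \<noteq> 0"
proof -
  have "P n \<noteq> 0"
    using degree_P[of n] P_0 by (cases n) auto
  then show ?thesis
    using degree_P[of n] leading_coeff_0_iff by metis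
qed

lemma poly_P_recurrence:
  "(x + c) * poly (P n) x = s n * poly (P (Suc n)) x + (\<Sum>i\<le>min n d. g n i * poly (P (n - i)) x)"
  using arg_cong[OF recurrence[of n], of "\<lambda>p. poly p x"] by (simp add: poly_sum distrib_right add.commute)

lemma basis_coords_P: "j \<le> N \<Longrightarrow> basis_coords P N (P j) l = (if l = j then 1 else 0)"
proof (induction N arbitrary: l)
  case 0
  then show ?case
    by (simp add: P_0)
next
  case (Suc N)
  show ?case
  proof (cases "j = Suc N")
    case True
    then show ?thesis
      using lead_coeff_P_nonzero[of "Suc N"] by (simp add: basis_coords_smult[of _ _ 0, simplified])
  next
    case False
    then have "j \<le> N" "coeff (P j) (Suc N) = 0"
      using Suc.prems degree_P[of j] by (auto intro: coeff_eq_0)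
    then show ?thesis
      using Suc.IH False by auto
  qed
qed

lemma dual_coord_P: "dual_coord P i (P j) = (if i = j then 1 else 0)"
  unfolding dual_coord_def degree_P by (simp add: basis_coords_P)

lemma dual_coord_tail_span: "p \<in> tail_span P lo \<Longrightarrow> i < lo \<Longrightarrow> dual_coord P i p = 0"
  by (induction rule: tail_span.induct) (auto simp: dual_coord_P dual_coord_add dual_coord_smult)

lemma X_mult_P_eq:
  "[:0, 1:] * P j = smult (s j) (P (Suc j)) + (\<Sum>i\<le>min j d. smult (g j i) (P (j - i))) - smult c (P j)"
  using recurrence[of j] by (simp add: algebra_simps)

lemma X_mult_P_in_tail_span: "[:0, 1:] * P j \<in> tail_span P (j - d)"
  unfolding X_mult_P_eq
  by (intro tail_span_diff tail_span.add tail_span.smult tail_span.basis tail_span_sum) auto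

lemma X_mult_tail_span: "p \<in> tail_span P lo \<Longrightarrow> [:0, 1:] * p \<in> tail_span P (lo - d)"
proof (induction rule: tail_span.induct)
  case (basis j)
  then show ?case
    using X_mult_P_in_tail_span[of j] by (rule_tac tail_span_antimono) auto
next
  case (add p q)
  show ?case
    unfolding distrib_left by (rule tail_span.add[OF add.IH])
next
  case (smult p a)
  show ?case
    unfolding mult_smult_right by (rule tail_span.smult[OF smult.IH])
qed

lemma mult_tail_span:
  "degree q \<le> m \<Longrightarrow> p \<in> tail_span P lo \<Longrightarrow> q * p \<in> tail_span P (lo - m * d)"
proof (induction q arbitrary: m)
  case (pCons a q)
  have "smult a p \<in> tail_span P (lo - m * d)"
    using pCons.prems(2) by (intro tail_span.smult) (rule tail_span_antimono, auto)
  moreover have "[:0, 1:] * (q * p) \<in> tail_span P (lo - m * d)"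
  proof (cases m)
    case 0
    then have "q = 0"
      using pCons by (cases "q = 0") auto
    then show ?thesis
      by (simp add: tail_span_zero)
  next
    case (Suc m')
    then have "q * p \<in> tail_span P (lo - m' * d)"
      using pCons by (intro pCons.IH) (auto split: if_splits)
    then show ?thesis
      using X_mult_tail_span Suc by (rule_tac tail_span_antimono) auto
  qed
  ultimately show ?case
    by (simp add: tail_span.add)
qed (simp add: tail_span_zero)

end

locale d_orthogonal_recurrence = poly_recurrence +
  assumes g_last_nonzero: "\<And>n. d \<le> n \<Longrightarrow> g n d \<noteq> 0"
    and d_pos: "0 < d"
begin

lemma X_mult_P_leading:
  assumes "d \<le> j"
  shows "[:0, 1:] * P j - smult (g j d) (P (j - d)) \<in> tail_span P (j - d + 1)"
proof -
  obtain d' where d': "d = Suc d'"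
    using d_pos by (cases d) auto
  have "(\<Sum>i\<le>min j d. smult (g j i) (P (j - i)))
      = (\<Sum>i\<le>d'. smult (g j i) (P (j - i))) + smult (g j d) (P (j - d))"
    using assms d' by (simp add: min_absorb2)
  then have "[:0, 1:] * P j - smult (g j d) (P (j - d))
      = smult (s j) (P (Suc j)) + (\<Sum>i\<le>d'. smult (g j i) (P (j - i))) - smult c (P j)"
    unfolding X_mult_P_eq by (simp add: algebra_simps)
  also have "\<dots> \<in> tail_span P (j - d + 1)"
    using assms d' by (intro tail_span_diff tail_span.add tail_span.smult tail_span.basis tail_span_sum) auto
  finally show ?thesis .
qed

lemma X_power_mult_P_leading:
  "m * d \<le> N \<Longrightarrow> \<exists>\<kappa>. \<kappa> \<noteq> 0 \<and>
     [:0, 1:] ^ m * P N - smult \<kappa> (P (N - m * d)) \<in> tail_span P (N - m * d + 1)"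
proof (induction m)
  case 0
  then show ?case
    by (intro exI[of _ 1]) (simp add: tail_span_zero)
next
  case (Suc m)
  then obtain \<kappa> where "\<kappa> \<noteq> 0"
    and rest: "[:0, 1:] ^ m * P N - smult \<kappa> (P (N - m * d)) \<in> tail_span P (N - m * d + 1)"
    by auto
  define j where "j = N - m * d"
  have j: "d \<le> j" "j - d = N - Suc m * d"
    using Suc.prems unfolding j_def by auto
  have "[:0, 1:] ^ Suc m * P N - smult (\<kappa> * g j d) (P (j - d))
      = [:0, 1:] * ([:0, 1:] ^ m * P N - smult \<kappa> (P j))
        + smult \<kappa> ([:0, 1:] * P j - smult (g j d) (P (j - d)))"
    by (simp add: algebra_simps smult_diff_right)
  also have "\<dots> \<in> tail_span P (j - d + 1)"
  proof (rule tail_span.add)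
    show "[:0, 1:] * ([:0, 1:] ^ m * P N - smult \<kappa> (P j)) \<in> tail_span P (j - d + 1)"
      using j unfolding j_def by (intro tail_span_antimono[OF X_mult_tail_span[OF rest]]) auto
    show "smult \<kappa> ([:0, 1:] * P j - smult (g j d) (P (j - d))) \<in> tail_span P (j - d + 1)"
      by (rule tail_span.smult[OF X_mult_P_leading[OF j(1)]])
  qed
  finally show ?case
    using \<open>\<kappa> \<noteq> 0\<close> g_last_nonzero[OF j(1)] unfolding j(2) by (intro exI[of _ "\<kappa> * g j d"]) simp
qed

lemma mult_P_leading:
  assumes "m * d \<le> N"
  shows "\<exists>\<kappa>. \<kappa> \<noteq> 0 \<and> P m * P N - smult \<kappa> (P (N - m * d)) \<in> tail_span P (N - m * d + 1)"
proof -
  obtain \<kappa> where "\<kappa> \<noteq> 0"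
    and leading: "[:0, 1:] ^ m * P N - smult \<kappa> (P (N - m * d)) \<in> tail_span P (N - m * d + 1)"
    using X_power_mult_P_leading[OF assms] by auto
  define R where "R = P m - monom (coeff (P m) m) m"
  have "R * P N \<in> tail_span P (N - m * d + 1)"
  proof (cases m)
    case 0
    then show ?thesis
      by (simp add: R_def P_0 tail_span_zero)
  next
    case (Suc m')
    have "degree R \<le> m'"
      unfolding R_def using degree_P[of m] Suc
      by (intro degree_le) (auto simp: coeff_eq_0 less_Suc_eq)
    then have "R * P N \<in> tail_span P (N - m' * d)"
      by (rule mult_tail_span) (simp add: tail_span.basis)
    then show ?thesis
      using assms d_pos Suc by (rule_tac tail_span_antimono) auto
  qed
  moreover have "P m * P N - smult (coeff (P m) m * \<kappa>) (P (N - m * d))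
      = smult (coeff (P m) m) ([:0, 1:] ^ m * P N - smult \<kappa> (P (N - m * d))) + R * P N"
    by (simp add: R_def monom_altdef algebra_simps smult_diff_right)
  ultimately show ?thesis
    using leading lead_coeff_P_nonzero[of m] \<open>\<kappa> \<noteq> 0\<close>
    by (intro exI[of _ "coeff (P m) m * \<kappa>"]) (simp add: tail_span.add tail_span.smult)
qed

lemma dual_coord_product_eq_0:
  "m * d + i + 1 \<le> n \<Longrightarrow> dual_coord P i (P m * P n) = 0"
  using mult_tail_span[of "P m" m "P n" n] degree_P[of m]
  by (intro dual_coord_tail_span[where lo = "n - m * d"]) (auto intro: tail_span.basis)

lemma dual_coord_product_nonzero:
  assumes "i < d"
  shows "dual_coord P i (P n * P (n * d + i)) \<noteq> 0"
proof -
  obtain \<kappa> where "\<kappa> \<noteq> 0"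
    and "P n * P (n * d + i) - smult \<kappa> (P i) \<in> tail_span P (i + 1)"
    using mult_P_leading[of n "n * d + i"] by auto
  then have "dual_coord P i (P n * P (n * d + i) - smult \<kappa> (P i)) = 0"
    by (intro dual_coord_tail_span) auto
  then have "dual_coord P i (P n * P (n * d + i)) = \<kappa>"
    using dual_coord_add[of P i "P n * P (n * d + i) - smult \<kappa> (P i)" "smult \<kappa> (P i)"]
    by (simp add: dual_coord_smult dual_coord_P)
  then show ?thesis
    using \<open>\<kappa> \<noteq> 0\<close> by simp
qed

end

lemma d_orthogonal_if_recurrence:
  fixes P :: "nat \<Rightarrow> complex poly"
  assumes "d_orthogonal_recurrence P c s g d"
  shows "d_orthogonal d P"
proof -
  interpret d_orthogonal_recurrence P c s g d
    by fact
  show ?thesis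
    unfolding d_orthogonal_def polynomial_set_def
    using degree_P linear_functional_dual_coord dual_coord_product_eq_0 dual_coord_product_nonzero
    by (intro conjI exI[of _ "dual_coord P"]) auto
qed

theorem mainTheorem2:
  fixes r :: nat and \<beta> :: real and Q :: "complex poly" and P :: "nat \<Rightarrow> complex poly"
  assumes "r \<ge> 1" and "\<beta> > 0"
    and "degree Q = r" and "poly Q 0 = 0"
    and "coef_a Q (r - 1) * coef_b Q (2 * r - 1) \<noteq> 0"
    and "P 0 = 1"
    and "\<And>n. [:complex_of_real (\<beta> / 2), 1:] * P n =
           smult (complex_of_real (sqrt (real (n + 1) * (real n + \<beta>)))) (P (Suc n))
           + (\<Sum>i\<le>min n (2 * r - 1). smult (gamma \<beta> Q n i) (P (n - i)))"
  shows "(\<forall>n k. psi \<beta> Q n k = poly (P n) (of_nat k) * psi \<beta> Q 0 k)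
         \<and> d_orthogonal (2 * r - 1) P"
proof -
  define s where "s n = complex_of_real (sqrt (real (n + 1) * (real n + \<beta>)))" for n
  have deg_Q: "0 < degree Q" "2 * r - 1 = 2 * degree Q - 1"
    using assms(1,3) by auto
  have s_nonzero: "s n \<noteq> 0" for n
    using assms(2) by (simp add: s_def add_nonneg_pos)
  \<comment> \<open>of the factors in assumption 5 only coef_b is used: coef_a Q (r - 1) = - 2 r lead_coeff Q\<close>
  have rec: "d_orthogonal_recurrence P (complex_of_real (\<beta> / 2)) s (gamma \<beta> Q) (2 * r - 1)"
    using assms(1,2,5,6,7) deg_Q s_nonzero gamma_last_nonzero
    by unfold_locales (auto simp: s_def)
  interpret d_orthogonal_recurrence P "complex_of_real (\<beta> / 2)" s "gamma \<beta> Q" "2 * r - 1"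
    by (fact rec)
  have "psi \<beta> Q n k = poly (P n) (of_nat k) * psi \<beta> Q 0 k" for n k
  proof (rule recurrence_solution_unique[of s])
    show "(of_nat k + complex_of_real (\<beta> / 2)) * psi \<beta> Q n k = s n * psi \<beta> Q (Suc n) k
        + (\<Sum>i\<le>min n (2 * r - 1). gamma \<beta> Q n i * psi \<beta> Q (n - i) k)" for n
      unfolding s_def deg_Q(2) by (rule psi_recurrence[OF assms(2,4) deg_Q(1)])
  qed (rule s_nonzero poly_P_recurrence | simp add: P_0)+
  with d_orthogonal_if_recurrence[OF rec] show ?thesis
    by blast
qed

end
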